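(* Under the same setting as Lemma 1 (assumptions (A1)–(A4), FedKRSO-SGD iteration, learning rate $0<\eta\le\frac{r}{16Ld_nJ}$), for every round $t$, $$Q^t\le\frac{8J^3\eta^2d_n}{r}\varsigma^2+\frac{8J^3\eta^2d_n}{r}\mathbb{E}\big[\|\nabla F(W^t)\|_F^2\big]+\frac{4J^2d_n^2\eta^2\sigma^2}{r^2},$$ where $Q^t:=\frac1N\sum_{n=1}^N\sum_{j=0}^{J-1}\mathbb{E}\big[\|B^{t,j}_{k(n),n}P^t_{k(n)}\|_F^2\big]$.
   Context: Setting: $N$ clients; each client $n\in[N]$ has a differentiable local objective $F_n:\mathbb{R}^{d_m\times d_n}\to\mathbb{R}$ and the global objective is $F(W)=\frac1N\sum_{n=1}^N F_n(W)$. $\|\cdot\|_F$ is the Frobenius norm. Fix integers $r\ge1$ (rank), $K\ge1$ (number of seeds), $J\ge1$ (local steps), a learning rate $\eta>0$ and an initial matrix $W^0$. FedKRSO-SGD iteration (one interval per round, plain SGD, no momentum): at each round $t=0,1,2,\dots$, random matrices $P^t_1,\dots,P^t_K\in\mathbb{R}^{r\times d_n}$ are drawn, and each client $n$ independently draws an index $k(n)=k(n,t)$ uniformly from $\{1,\dots,K\}$. Client $n$ sets $B^{t,0}_{k(n),n}=0\in\mathbb{R}^{d_m\times r}$ and, for $j=0,\dots,J-1$, with local model $W^{t,j}_n:=W^t+B^{t,j}_{k(n),n}P^t_{k(n)}$, updates $$B^{t,j+1}_{k(n),n}=B^{t,j}_{k(n),n}-\eta\,\hat\nabla f_n(W^{t,j}_n)\,(P^t_{k(n)})^\top,$$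 where $\hat\nabla f_n(W)$ is a stochastic gradient computed on a fresh sample. The next global model is $$W^{t+1}=W^t+\frac1N\sum_{n=1}^N B^{t,J}_{k(n),n}P^t_{k(n)}.$$ Standing assumptions: (A1) ($L$-smoothness) For all $n$ and all $W_1,W_2$: $\|\nabla F_n(W_1)-\nabla F_n(W_2)\|_F\le L\|W_1-W_2\|_F$. (A2) (Stochastic gradients) Conditionally on all past randomness and on the random matrices, $\mathbb{E}[\hat\nabla f_n(W)]=\nabla F_n(W)$ and $\mathbb{E}\|\hat\nabla f_n(W)-\nabla F_n(W)\|_F^2\le\sigma^2$ for all $W$; samples are independent across clients and steps. (A3) (Heterogeneity) There is $\varsigma\ge0$ with $\frac1N\sum_{n=1}^N\|\nabla F_n(W)\|_F^2\le\varsigma^2+\|\nabla F(W)\|_F^2$ for all $W$. (A4) (Random matrices) The matrices $\{P^t_k\}_{k\in[K],t}$ are mutually independent, independent of the data sampling and of the index draws, and each satisfies $P^t_k(P^t_k)^\top=\frac{d_n}{r}I_r$ almost surely and $\mathbb{E}[(P^t_k)^\top P^t_k]=I_{d_n}$. *)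

theory Defs
  imports "HOL-Probability.Probability"
begin

text \<open>Matrices: W :: real^'dn^'dm is a d_m x d_n matrix (rows indexed by 'dm),
  B :: real^'r^'dm is d_m x r, P :: real^'dn^'r is r x d_n; ** is matrix product;
  norm on real^'a^'b is the Frobenius norm, inner product is the Frobenius inner product.\<close>

fun fedkrso_B ::
  "real \<Rightarrow> (nat \<Rightarrow> real^'dn^'dm \<Rightarrow> 's \<Rightarrow> real^'dn^'dm) \<Rightarrow> real^'dn^'dm
     \<Rightarrow> real^'dn^'r \<Rightarrow> (nat \<times> nat \<Rightarrow> 's) \<Rightarrow> nat \<Rightarrow> nat \<Rightarrow> real^'r^'dm" where
  "fedkrso_B eta g W P xi n 0 = 0"
| "fedkrso_B eta g W P xi n (Suc j) =
     fedkrso_B eta g W P xi n j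
     - eta *\<^sub>R (g n (W + fedkrso_B eta g W P xi n j ** P) (xi (n, j)) ** transpose P)"

text \<open>Probability space of one round t: the current global model W^t (arbitrary law muW),
  independent of the fresh randomness of round t: random matrices P_k (laws muP k, k<K),
  uniform index draws k(n) (n<N), and fresh samples xi(n,j) (laws D n j).\<close>
definition round_space ::
  "(real^'dn^'dm) measure \<Rightarrow> (nat \<Rightarrow> (real^'dn^'r) measure) \<Rightarrow> (nat \<Rightarrow> nat \<Rightarrow> 's measure)
     \<Rightarrow> nat \<Rightarrow> nat \<Rightarrow> nat
     \<Rightarrow> ((real^'dn^'dm) \<times> (nat \<Rightarrow> real^'dn^'r) \<times> (nat \<Rightarrow> nat) \<times> (nat \<times> nat \<Rightarrow> 's)) measure" where
  "round_space muW muP D N K J =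
     muW \<Otimes>\<^sub>M (PiM {..<K} muP \<Otimes>\<^sub>M
       (PiM {..<N} (\<lambda>_. measure_pmf (pmf_of_set {..<K})) \<Otimes>\<^sub>M
        PiM ({..<N} \<times> {..<J}) (\<lambda>(n, j). D n j)))"

definition fedkrso_term ::
  "real \<Rightarrow> (nat \<Rightarrow> real^'dn^'dm \<Rightarrow> 's \<Rightarrow> real^'dn^'dm) \<Rightarrow> nat \<Rightarrow> nat
     \<Rightarrow> (real^'dn^'dm) \<times> (nat \<Rightarrow> real^'dn^'r) \<times> (nat \<Rightarrow> nat) \<times> (nat \<times> nat \<Rightarrow> 's) \<Rightarrow> real" where
  "fedkrso_term eta g n j \<omega> = (case \<omega> of (W, Ps, ks, xi) \<Rightarrow>
      (norm (fedkrso_B eta g W (Ps (ks n)) xi n j ** Ps (ks n)))\<^sup>2)"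

end

theory Submission
  imports Defs
begin

(*
  Within a round, client n's factor X_j = B_j P obeys X_(j+1) = X_j - eta g(W + X_j) P^T P.
  Since P P^T = c I with c = d_n / r, right multiplication by P^T P scales norms by at most c.
  Integrating out the fresh sample, the noise only adds eta^2 c^2 sigma^2; the exact step is split
  with weights 1 + 1/J and 1 + J and controlled by L-smoothness, which gives the recursion
  E|X_(j+1)|^2 <= a E|X_j|^2 + (1 + J) eta^2 |grad F_n(W) P^T P|^2 + eta^2 c^2 sigma^2
  with a = (1 + 1/J)(1 + 1/(16 J))^2 and a^J <= 8, so the J local steps together cost a factor 4 J^2.
  Finally |G P^T P|^2 = c <G, G P^T P> and E[P^T P] = I turn the gradient term into c |grad F_n(W)|^2,
  and averaging over the clients with the heterogeneity bound (A3) yields the claim.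
*)

section \<open>Matrices with orthogonal rows\<close>

lemma matrix_add_rdistrib: "((A::'a::semiring_1^'n^'m) + B) ** C = A ** C + B ** C"
  by (vector matrix_matrix_mult_def sum.distrib[symmetric] distrib_right)

lemma matrix_diff_rdistrib: "((A::'a::ring_1^'n^'m) - B) ** C = A ** C - B ** C"
  by (vector matrix_matrix_mult_def sum_subtractf[symmetric] left_diff_distrib)

lemma bounded_bilinear_matrix_mult: "bounded_bilinear (\<lambda>(A::real^'n^'m) (B::real^'p^'n). A ** B)"
  by (auto simp: bilinear_conv_bounded_bilinear[symmetric] bilinear_def intro!: linearI
      simp: matrix_add_ldistrib matrix_add_rdistrib scalar_matrix_assoc matrix_scalar_ac)

lemma bounded_linear_matrix_mult_left: "bounded_linear (\<lambda>A::real^'n^'m. A ** (B::real^'p^'n))"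
  by (rule bounded_bilinear.bounded_linear_left[OF bounded_bilinear_matrix_mult])

lemma bounded_linear_matrix_mult_right: "bounded_linear (\<lambda>B::real^'p^'n. (A::real^'n^'m) ** B)"
  by (rule bounded_bilinear.bounded_linear_right[OF bounded_bilinear_matrix_mult])

lemma inner_matrix_mult: "inner ((A::real^'k^'m) ** B) C = inner A (C ** transpose B)"
  unfolding inner_vec_def matrix_matrix_mult_def transpose_def
  by (simp add: inner_real_def sum_distrib_left sum_distrib_right mult_ac sum.swap[of _ "UNIV::'k set"])

lemma borel_measurable_matrix_mult [measurable (raw)]:
  fixes A :: "'a \<Rightarrow> real^'n^'m" and B :: "'a \<Rightarrow> real^'p^'n"
  assumes "A \<in> borel_measurable M" "B \<in> borel_measurable M"
  shows "(\<lambda>x. A x ** B x) \<in> borel_measurable M"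
  using assms by (rule borel_measurable_continuous_Pair)
    (intro bounded_bilinear.continuous_on[OF bounded_bilinear_matrix_mult] continuous_intros)

lemma bounded_linear_transpose: "bounded_linear (transpose :: real^'n^'m \<Rightarrow> real^'m^'n)"
  by (auto simp: linear_conv_bounded_linear[symmetric] transpose_def vec_eq_iff intro!: linearI)

lemma borel_measurable_transpose [measurable (raw)]:
  "A \<in> borel_measurable M \<Longrightarrow> (\<lambda>x. transpose (A x :: real^'n^'m)) \<in> borel_measurable M"
  by (rule borel_measurable_continuous_on[OF linear_continuous_on[OF bounded_linear_transpose]])

locale orthogonal_rows =
  fixes P :: "real^'n^'r" and c :: real
  assumes rows_orth: "P ** transpose P = c *\<^sub>R mat 1"
begin

lemma scale_nonneg: "0 \<le> c"
proof -
  fix i :: 'r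
  have "c = (P ** transpose P) $ i $ i" by (simp add: rows_orth mat_def)
  also have "\<dots> = inner (row i P) (row i P)" by (simp add: matrix_mult_transpose_dot_row)
  finally show ?thesis by simp
qed

lemma gram_mult_self: "(transpose P ** P) ** (transpose P ** P) = c *\<^sub>R (transpose P ** P)"
proof -
  have "(transpose P ** P) ** (transpose P ** P) = transpose P ** ((P ** transpose P) ** P)"
    by (simp add: matrix_mul_assoc)
  then show ?thesis
    by (simp add: rows_orth matrix_scalar_ac scalar_matrix_assoc[symmetric])
qed

lemma inner_mult_gram: "inner A (A ** (transpose P ** P)) = (norm (A ** transpose P))\<^sup>2"
  by (simp add: power2_norm_eq_inner inner_matrix_mult matrix_mul_assoc)

lemma norm_mult_gram_sq: "(norm (A ** (transpose P ** P)))\<^sup>2 = c * inner A (A ** (transpose P ** P))"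
proof -
  have "(norm (A ** (transpose P ** P)))\<^sup>2 = inner A ((A ** (transpose P ** P)) ** (transpose P ** P))"
    by (simp add: power2_norm_eq_inner inner_matrix_mult matrix_transpose_mul)
  also have "\<dots> = c * inner A (A ** (transpose P ** P))"
    unfolding matrix_mul_assoc[of A, symmetric] gram_mult_self matrix_scalar_ac
      scalar_matrix_assoc[symmetric] by simp
  finally show ?thesis .
qed

lemma norm_mult_gram_le: "norm (A ** (transpose P ** P)) \<le> c * norm A"
proof -
  let ?AM = "A ** (transpose P ** P)"
  have "(norm ?AM)\<^sup>2 \<le> c * (norm A * norm ?AM)"
    unfolding norm_mult_gram_sq using scale_nonneg Cauchy_Schwarz_ineq2[of A ?AM]
    by (intro mult_left_mono) auto
  then have sq: "norm ?AM * norm ?AM \<le> (c * norm A) * norm ?AM"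
    by (simp add: power2_eq_square mult_ac)
  show ?thesis
  proof (cases "norm ?AM = 0")
    case True
    then show ?thesis using scale_nonneg by simp
  next
    case False
    then show ?thesis by (intro mult_right_le_imp_le[OF sq]) simp
  qed
qed

end

section \<open>Second moment of a noisy gradient step\<close>

lemma norm_add_sq_le_weighted:
  fixes u v :: "'a::real_inner"
  assumes "0 < a"
  shows "(norm (u + v))\<^sup>2 \<le> (1 + a) * (norm u)\<^sup>2 + (1 + 1 / a) * (norm v)\<^sup>2"
proof -
  have "0 \<le> (norm (sqrt a *\<^sub>R u - (1 / sqrt a) *\<^sub>R v))\<^sup>2" by simp
  also have "\<dots> = a * (norm u)\<^sup>2 + (1 / a) * (norm v)\<^sup>2 - 2 * inner u v"
    using assms unfolding power2_norm_eq_inner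
    by (simp add: inner_diff_left inner_diff_right inner_commute power2_eq_square
        real_sqrt_mult[symmetric] algebra_simps)
  finally show ?thesis
    unfolding power2_norm_eq_inner by (simp add: inner_add_left inner_add_right inner_commute algebra_simps)
qed

lemma norm_sq_lipschitz_step_le:
  fixes G :: "'a::real_inner \<Rightarrow> 'b::real_normed_vector" and T :: "'b \<Rightarrow> 'a"
  assumes T: "linear T" "\<And>x. norm (T x) \<le> C * norm x" "0 \<le> C"
    and G: "\<And>x y. norm (G x - G y) \<le> L * norm (x - y)"
    and "0 \<le> eta" "0 < a"
  shows "(norm (X - eta *\<^sub>R T (G (W + X))))\<^sup>2
    \<le> (1 + a) * (1 + eta * C * L)\<^sup>2 * (norm X)\<^sup>2 + (1 + 1 / a) * eta\<^sup>2 * (norm (T (G W)))\<^sup>2"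
proof -
  define u where "u = X - eta *\<^sub>R T (G (W + X) - G W)"
  define v where "v = - (eta *\<^sub>R T (G W))"
  have split: "X - eta *\<^sub>R T (G (W + X)) = u + v"
    unfolding u_def v_def by (simp add: linear_diff[OF T(1)] algebra_simps)
  have "norm (T (G (W + X) - G W)) \<le> C * norm (G (W + X) - G W)" by (rule T(2))
  also have "\<dots> \<le> C * (L * norm X)" using G[of "W + X" W] \<open>0 \<le> C\<close> by (intro mult_left_mono) auto
  finally have lip: "norm (T (G (W + X) - G W)) \<le> C * (L * norm X)" .
  have "norm u \<le> norm X + eta * norm (T (G (W + X) - G W))"
    unfolding u_def using norm_triangle_ineq4[of X "eta *\<^sub>R T (G (W + X) - G W)"] \<open>0 \<le> eta\<close>
    by simp
  also have "\<dots> \<le> norm X + eta * (C * (L * norm X))"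
    using lip \<open>0 \<le> eta\<close> by (intro add_left_mono mult_left_mono)
  finally have "norm u \<le> (1 + eta * C * L) * norm X" by (simp add: algebra_simps)
  then have "(norm u)\<^sup>2 \<le> ((1 + eta * C * L) * norm X)\<^sup>2" by (rule power_mono) simp
  then have u_sq: "(norm u)\<^sup>2 \<le> (1 + eta * C * L)\<^sup>2 * (norm X)\<^sup>2" by (simp add: power_mult_distrib)
  have "(norm (u + v))\<^sup>2 \<le> (1 + a) * (norm u)\<^sup>2 + (1 + 1 / a) * (norm v)\<^sup>2"
    by (rule norm_add_sq_le_weighted[OF \<open>0 < a\<close>])
  also have "\<dots> \<le> (1 + a) * ((1 + eta * C * L)\<^sup>2 * (norm X)\<^sup>2) + (1 + 1 / a) * (norm v)\<^sup>2"
    using u_sq \<open>0 < a\<close> by (intro add_right_mono mult_left_mono) auto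
  finally show ?thesis
    unfolding split v_def using \<open>0 \<le> eta\<close> by (simp add: power_mult_distrib mult_ac)
qed

lemma nn_integral_norm_sq_sub_centered:
  fixes xi :: "'s \<Rightarrow> 'a::euclidean_space"
  assumes D: "prob_space D" and xi: "integrable D xi" "integral\<^sup>L D xi = 0"
    and xi_sq: "integrable D (\<lambda>s. (norm (xi s))\<^sup>2)"
  shows "(\<integral>\<^sup>+ s. ennreal ((norm (A - xi s))\<^sup>2) \<partial>D) = ennreal ((norm A)\<^sup>2 + (\<integral>s. (norm (xi s))\<^sup>2 \<partial>D))"
proof -
  interpret D: prob_space D by (rule D)
  have cross_int: "integrable D (\<lambda>s. inner A (xi s))"
    by (rule integrable_bounded_linear[OF bounded_linear_inner_right xi(1)])
  have cross_mean: "(\<integral>s. inner A (xi s) \<partial>D) = 0"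
    using integral_bounded_linear[OF bounded_linear_inner_right xi(1)] xi(2) by simp
  have expand: "(norm (A - xi s))\<^sup>2 = (norm A)\<^sup>2 - 2 * inner A (xi s) + (norm (xi s))\<^sup>2" for s
    unfolding power2_norm_eq_inner by (simp add: inner_diff_left inner_diff_right inner_commute)
  have "(\<integral>\<^sup>+ s. ennreal ((norm (A - xi s))\<^sup>2) \<partial>D)
      = (\<integral>\<^sup>+ s. ennreal ((norm A)\<^sup>2 - 2 * inner A (xi s) + (norm (xi s))\<^sup>2) \<partial>D)"
    by (simp only: expand)
  also have "\<dots> = ennreal (\<integral>s. (norm A)\<^sup>2 - 2 * inner A (xi s) + (norm (xi s))\<^sup>2 \<partial>D)"
  proof (rule nn_integral_eq_integral)
    show "integrable D (\<lambda>s. (norm A)\<^sup>2 - 2 * inner A (xi s) + (norm (xi s))\<^sup>2)"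
      using cross_int xi_sq by simp
    show "AE s in D. 0 \<le> (norm A)\<^sup>2 - 2 * inner A (xi s) + (norm (xi s))\<^sup>2"
      by (simp flip: expand)
  qed
  also have "(\<integral>s. (norm A)\<^sup>2 - 2 * inner A (xi s) + (norm (xi s))\<^sup>2 \<partial>D)
      = (norm A)\<^sup>2 + (\<integral>s. (norm (xi s))\<^sup>2 \<partial>D)"
    using cross_int xi_sq cross_mean by (simp add: D.prob_space)
  finally show ?thesis .
qed

lemma nn_integral_norm_sq_sub_linear_le:
  fixes gs :: "'s \<Rightarrow> 'b::euclidean_space" and T :: "'b \<Rightarrow> 'a::euclidean_space"
    and sigma :: real
  assumes D: "prob_space D" and gs: "integrable D gs" "integral\<^sup>L D gs = G0"
    and var: "(\<integral>\<^sup>+ s. ennreal ((norm (gs s - G0))\<^sup>2) \<partial>D) \<le> ennreal (sigma\<^sup>2)"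
    and T: "bounded_linear T" "\<And>x. norm (T x) \<le> C * norm x"
  shows "(\<integral>\<^sup>+ s. ennreal ((norm (X - T (gs s)))\<^sup>2) \<partial>D) \<le> ennreal ((norm (X - T G0))\<^sup>2 + C\<^sup>2 * sigma\<^sup>2)"
proof -
  interpret D: prob_space D by (rule D)
  define xi where "xi s = gs s - G0" for s
  have xi_int: "integrable D xi" unfolding xi_def using gs by simp
  then have [measurable]: "xi \<in> borel_measurable D" by (rule borel_measurable_integrable)
  have [measurable]: "T \<in> borel_measurable borel"
    by (intro borel_measurable_continuous_onI linear_continuous_on T(1))
  have "(\<integral>\<^sup>+ s. ennreal (norm ((norm (xi s))\<^sup>2)) \<partial>D) < \<infinity>"
    using var unfolding xi_def by (simp add: order_le_less_trans)
  then have xi_sq_int: "integrable D (\<lambda>s. (norm (xi s))\<^sup>2)"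
    by (intro integrableI_bounded) measurable
  have T_sq: "(norm (T x))\<^sup>2 \<le> C\<^sup>2 * (norm x)\<^sup>2" for x
    using power_mono[OF T(2) norm_ge_zero, of x 2] by (simp add: power_mult_distrib)
  have Txi_sq_int: "integrable D (\<lambda>s. (norm (T (xi s)))\<^sup>2)"
    by (rule Bochner_Integration.integrable_bound[OF integrable_mult_right[OF xi_sq_int, of "C\<^sup>2"]])
      (use T_sq in auto)
  have "integral\<^sup>L D xi = 0" unfolding xi_def using gs by (simp add: D.prob_space)
  then have Txi_mean: "(\<integral>s. T (xi s) \<partial>D) = 0"
    using integral_bounded_linear[OF T(1) xi_int] linear_0[OF bounded_linear.linear[OF T(1)]] by simp
  have "ennreal (\<integral>s. (norm (xi s))\<^sup>2 \<partial>D) = (\<integral>\<^sup>+ s. ennreal ((norm (xi s))\<^sup>2) \<partial>D)"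
    by (rule nn_integral_eq_integral[OF xi_sq_int, symmetric]) simp
  also have "\<dots> \<le> ennreal (sigma\<^sup>2)" using var unfolding xi_def .
  finally have "(\<integral>s. (norm (xi s))\<^sup>2 \<partial>D) \<le> sigma\<^sup>2" by (simp add: ennreal_le_iff)
  then have noise: "(\<integral>s. (norm (T (xi s)))\<^sup>2 \<partial>D) \<le> C\<^sup>2 * sigma\<^sup>2"
    using integral_mono[OF Txi_sq_int integrable_mult_right[OF xi_sq_int] T_sq]
    by (simp add: order_trans mult_left_mono)
  have split: "X - T (gs s) = (X - T G0) - T (xi s)" for s
    unfolding xi_def by (simp add: linear_diff[OF bounded_linear.linear[OF T(1)]])
  have "(\<integral>\<^sup>+ s. ennreal ((norm (X - T (gs s)))\<^sup>2) \<partial>D)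
      = (\<integral>\<^sup>+ s. ennreal ((norm ((X - T G0) - T (xi s)))\<^sup>2) \<partial>D)"
    by (simp only: split)
  also have "\<dots> = ennreal ((norm (X - T G0))\<^sup>2 + (\<integral>s. (norm (T (xi s)))\<^sup>2 \<partial>D))"
    by (rule nn_integral_norm_sq_sub_centered[OF D integrable_bounded_linear[OF T(1) xi_int]
        Txi_mean Txi_sq_int])
  also have "\<dots> \<le> ennreal ((norm (X - T G0))\<^sup>2 + C\<^sup>2 * sigma\<^sup>2)"
    using noise by (intro ennreal_leI) simp
  finally show ?thesis .
qed

section \<open>The local recursion\<close>

lemma growth_factor_power_le:
  "((1 + 1 / real J) * (1 + 1 / (16 * real J))\<^sup>2) ^ J \<le> 8"
proof -
  have "((1 + 1 / real J) * (1 + 1 / (16 * real J))\<^sup>2) ^ J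
      \<le> (exp (1 / real J) * (exp (1 / (16 * real J)))\<^sup>2) ^ J"
    by (intro power_mono mult_mono exp_ge_add_one_self) auto
  also have "\<dots> = exp (real J * (9 / (8 * real J)))"
    by (simp add: exp_of_nat_mult[symmetric] power2_eq_square exp_add[symmetric])
  also have "\<dots> \<le> exp (9 / 8)"
    by (cases "J = 0") auto
  also have "\<dots> \<le> 8"
  proof -
    have "(exp (9 / 8 :: real))\<^sup>2 \<le> (exp 1) ^ 3"
      by (simp add: exp_of_nat_mult[symmetric] power2_eq_square exp_add[symmetric])
    also have "\<dots> \<le> 8\<^sup>2"
      using power_mono[OF exp_le, of 3] by simp
    finally show ?thesis by (rule power2_le_imp_le) auto
  qed
  finally show ?thesis .
qed

lemma sum_partial_geometric_le:
  fixes a :: real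
  assumes "1 \<le> a" "a ^ J \<le> 8"
  shows "(\<Sum>j<J. \<Sum>i<j. a ^ i) \<le> 4 * (real J)\<^sup>2"
proof -
  have "a ^ i \<le> 8" if "i < J" for i
    using power_increasing[of i J a] assms that by linarith
  then have "(\<Sum>j<J. \<Sum>i<j. a ^ i) \<le> (\<Sum>j<J. \<Sum>i<j. 8)"
    by (intro sum_mono) auto
  also have "\<dots> \<le> 4 * (real J)\<^sup>2"
    by (induction J) (auto simp: power2_eq_square algebra_simps)
  finally show ?thesis .
qed

lemma ennreal_affine_recursion_le:
  assumes step: "\<And>j. j < J \<Longrightarrow> e (Suc j) \<le> ennreal a * e j + ennreal b"
    and "e 0 = 0" "0 \<le> a" "0 \<le> b"
  shows "j \<le> J \<Longrightarrow> e j \<le> ennreal ((\<Sum>i<j. a ^ i) * b)"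
proof (induction j)
  case 0
  then show ?case using \<open>e 0 = 0\<close> by simp
next
  case (Suc j)
  have sum_Suc: "(\<Sum>i<Suc j. a ^ i) = 1 + a * (\<Sum>i<j. a ^ i)"
    by (subst sum.lessThan_Suc_shift) (simp add: sum_distrib_left del: sum.lessThan_Suc)
  have "e (Suc j) \<le> ennreal a * e j + ennreal b"
    using Suc.prems by (intro step) simp
  also have "\<dots> \<le> ennreal a * ennreal ((\<Sum>i<j. a ^ i) * b) + ennreal b"
    using Suc by (intro add_right_mono mult_left_mono) auto
  also have "\<dots> = ennreal ((\<Sum>i<Suc j. a ^ i) * b)"
    unfolding sum_Suc using assms(3,4)
    by (simp add: ennreal_mult ennreal_plus sum_nonneg distrib_right mult.assoc)
  finally show ?case .
qed

section \<open>Measurability and integration over a round\<close>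

lemma measurable_fedkrso_B:
  fixes g :: "nat \<Rightarrow> real^'dn^'dm \<Rightarrow> 's \<Rightarrow> real^'dn^'dm"
    and w :: "'a \<Rightarrow> real^'dn^'dm" and p :: "'a \<Rightarrow> real^'dn^'r"
  assumes g: "\<forall>n<N. \<forall>j<J. (\<lambda>(W, s). g n W s) \<in> borel_measurable (borel \<Otimes>\<^sub>M D n j)"
    and w: "w \<in> borel_measurable M" and p: "p \<in> borel_measurable M"
    and x: "x \<in> M \<rightarrow>\<^sub>M PiM ({..<N} \<times> {..<J}) (\<lambda>(n, j). D n j)" and n: "n < N"
  shows "j \<le> J \<Longrightarrow> (\<lambda>m. fedkrso_B eta g (w m) (p m) (x m) n j) \<in> borel_measurable M"
proof (induction j)
  case 0
  then show ?case by simp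
next
  case (Suc j)
  then have IH: "(\<lambda>m. fedkrso_B eta g (w m) (p m) (x m) n j) \<in> borel_measurable M" by simp
  have j: "j < J" using Suc by simp
  have "(\<lambda>m. x m (n, j)) \<in> M \<rightarrow>\<^sub>M D n j"
    using measurable_compose[OF x measurable_component_singleton[of "(n, j)"]] n j by simp
  then have "(\<lambda>m. (w m + fedkrso_B eta g (w m) (p m) (x m) n j ** p m, x m (n, j)))
      \<in> M \<rightarrow>\<^sub>M borel \<Otimes>\<^sub>M D n j"
    using w p IH by measurable
  from measurable_compose[OF this g[rule_format, OF n j]]
  have "(\<lambda>m. g n (w m + fedkrso_B eta g (w m) (p m) (x m) n j ** p m) (x m (n, j))) \<in> borel_measurable M"
    by simp
  then show ?case using IH p by simp
qed

lemma fedkrso_B_fun_upd: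
  "j \<le> i \<Longrightarrow> fedkrso_B eta g W P (xi((n, i) := y)) n j = fedkrso_B eta g W P xi n j"
  by (induction j) auto

lemma fedkrso_B_Suc_mult:
  "fedkrso_B eta g W P xi n (Suc j) ** P
   = fedkrso_B eta g W P xi n j ** P
     - eta *\<^sub>R (g n (W + fedkrso_B eta g W P xi n j ** P) (xi (n, j)) ** (transpose P ** P))"
  by (simp add: matrix_diff_rdistrib scalar_matrix_assoc[symmetric] matrix_mul_assoc)

lemma nn_integral_PiM_component:
  assumes "\<And>i. i \<in> I \<Longrightarrow> prob_space (M i)" "i \<in> I" "f \<in> borel_measurable (M i)"
  shows "(\<integral>\<^sup>+ x. f (x i) \<partial>PiM I M) = (\<integral>\<^sup>+ y. f y \<partial>M i)"
proof -
  have "(\<integral>\<^sup>+ y. f y \<partial>distr (PiM I M) (M i) (\<lambda>x. x i)) = (\<integral>\<^sup>+ x. f (x i) \<partial>PiM I M)"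
    using assms distr_PiM_component[of I M i] by (intro nn_integral_distr) auto
  then show ?thesis using assms distr_PiM_component[of I M i] by simp
qed

lemma nn_integral_PiM_fun_upd:
  assumes I: "finite I" "i \<in> I" and M: "\<And>k. k \<in> I \<Longrightarrow> sigma_finite_measure (M k)"
    and f: "f \<in> borel_measurable (PiM I M)"
  shows "(\<integral>\<^sup>+ x. f x \<partial>PiM I M) = (\<integral>\<^sup>+ x. \<integral>\<^sup>+ y. f (x(i := y)) \<partial>M i \<partial>PiM (I - {i}) M)"
proof -
  \<comment> \<open>extend M outside I, so that the product rules of the locale apply\<close>
  define M' where "M' k = (if k \<in> I then M k else count_space {undefined})" for k
  interpret product_sigma_finite M'
    unfolding product_sigma_finite_def M'_def
    using M by (auto intro: sigma_finite_measure_count_space_finite)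
  have PiM_eq: "PiM J M = PiM J M'" if "J \<subseteq> I" for J
    unfolding M'_def using that by (intro PiM_cong) auto
  have I_eq: "insert i (I - {i}) = I" using I by auto
  have "(\<integral>\<^sup>+ x. f x \<partial>PiM I M) = (\<integral>\<^sup>+ x. f x \<partial>PiM (insert i (I - {i})) M')"
    using PiM_eq[of I] I_eq by simp
  also have "\<dots> = (\<integral>\<^sup>+ x. \<integral>\<^sup>+ y. f (x(i := y)) \<partial>M' i \<partial>PiM (I - {i}) M')"
    using f I PiM_eq[of I] I_eq by (intro product_nn_integral_insert) auto
  finally show ?thesis using PiM_eq[of "I - {i}"] I by (simp add: M'_def)
qed

lemma borel_measurable_PiM_component:
  assumes "i \<in> I" "sets (M i) = sets borel"
  shows "(\<lambda>x. x i) \<in> borel_measurable (PiM I M)"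
proof -
  have "(\<lambda>x. x i) \<in> PiM I M \<rightarrow>\<^sub>M M i" using assms(1) by (rule measurable_component_singleton)
  then show ?thesis using measurable_cong_sets[OF refl assms(2), of "PiM I M"] by blast
qed

lemma measurable_PiM_select:
  fixes f :: "'a \<Rightarrow> 'i::countable \<Rightarrow> 'b::topological_space"
  assumes M: "\<And>i. i \<in> I \<Longrightarrow> sets (M i) = sets borel"
    and f: "f \<in> N \<rightarrow>\<^sub>M PiM I M" and h: "h \<in> N \<rightarrow>\<^sub>M count_space UNIV"
  shows "(\<lambda>x. f x (h x)) \<in> borel_measurable N"
proof (rule measurable_compose_countable[where f = "\<lambda>i x. f x i", OF _ h])
  fix i
  show "(\<lambda>x. f x i) \<in> borel_measurable N"
  proof (cases "i \<in> I")
    case True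
    from measurable_compose[OF f borel_measurable_PiM_component[of i I M, OF True M[OF True]]]
    show ?thesis .
  next
    case False
    then have "f x i = undefined" if "x \<in> space N" for x
      using measurable_space[OF f that] by (auto simp: space_PiM PiE_def extensional_def)
    then show ?thesis by (subst measurable_cong) auto
  qed
qed

lemma measurable_uniform_select:
  fixes muP :: "nat \<Rightarrow> 'p::topological_space measure"
  assumes "\<forall>k<K. sets (muP k) = sets borel" "n < N"
  shows "(\<lambda>(Ps, ks, x). (Ps (ks n), x))
    \<in> PiM {..<K} muP \<Otimes>\<^sub>M (PiM {..<N} (\<lambda>_. measure_pmf (pmf_of_set {..<K})) \<Otimes>\<^sub>M Xi) \<rightarrow>\<^sub>M borel \<Otimes>\<^sub>M Xi"
proof -
  let ?R = "PiM {..<K} muP \<Otimes>\<^sub>M (PiM {..<N} (\<lambda>_. measure_pmf (pmf_of_set {..<K})) \<Otimes>\<^sub>M Xi)"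
  have "(\<lambda>ks. ks n) \<in> PiM {..<N} (\<lambda>_. measure_pmf (pmf_of_set {..<K})) \<rightarrow>\<^sub>M count_space UNIV"
    using measurable_component_singleton[of n "{..<N}" "\<lambda>_. measure_pmf (pmf_of_set {..<K})"] assms(2)
    by (simp add: measurable_pmf_measure2)
  then have "(\<lambda>r. fst (snd r) n) \<in> ?R \<rightarrow>\<^sub>M count_space UNIV" by measurable
  then have "(\<lambda>r. fst r (fst (snd r) n)) \<in> borel_measurable ?R"
    using assms(1) by (intro measurable_PiM_select[where I = "{..<K}" and M = muP]) auto
  then show ?thesis by (simp add: split_beta')
qed

lemma nn_integral_PiM_pmf_of_set_component:
  assumes "n \<in> I" "finite A" "A \<noteq> {}"
  shows "(\<integral>\<^sup>+ ks. f (ks n) \<partial>PiM I (\<lambda>_. measure_pmf (pmf_of_set A))) = (\<Sum>k\<in>A. f k) / of_nat (card A)"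
  using assms nn_integral_PiM_component[of I "\<lambda>_. measure_pmf (pmf_of_set A)" n f]
  by (simp add: nn_integral_pmf_of_set prob_space_measure_pmf)

lemma prob_space_round_noise:
  assumes "\<forall>k<K. prob_space (muP k)" "\<forall>n<N. \<forall>j<J. prob_space (D n j)"
  shows "prob_space (PiM {..<K} muP \<Otimes>\<^sub>M
    (PiM {..<N} (\<lambda>_. measure_pmf (pmf_of_set {..<K})) \<Otimes>\<^sub>M PiM ({..<N} \<times> {..<J}) (\<lambda>(n, j). D n j)))"
  using assms by (intro prob_space_pair prob_space_PiM prob_space_measure_pmf) auto

lemma measurable_round_select:
  assumes "sets muW = sets borel" "\<forall>k<K. sets (muP k) = sets borel" "n < N"
  shows "(\<lambda>(W, Ps, ks, x). (W, Ps (ks n), x)) \<in> round_space muW muP D N K J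
    \<rightarrow>\<^sub>M borel \<Otimes>\<^sub>M (borel \<Otimes>\<^sub>M PiM ({..<N} \<times> {..<J}) (\<lambda>(n, j). D n j))"
proof -
  have "(\<lambda>\<omega>. (fst \<omega>, (\<lambda>(Ps, ks, x). (Ps (ks n), x)) (snd \<omega>))) \<in> round_space muW muP D N K J
      \<rightarrow>\<^sub>M borel \<Otimes>\<^sub>M (borel \<Otimes>\<^sub>M PiM ({..<N} \<times> {..<J}) (\<lambda>(n, j). D n j))"
    unfolding round_space_def
    using measurable_compose[OF measurable_snd measurable_uniform_select[OF assms(2,3)]]
      measurable_cong_sets[OF refl assms(1)] measurable_fst
    by (intro measurable_Pair) auto
  then show ?thesis by (simp add: split_beta')
qed

lemma nn_integral_uniform_select:
  fixes muP :: "nat \<Rightarrow> 'p::topological_space measure" and G :: "'p \<Rightarrow> 'x \<Rightarrow> ennreal"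
  assumes muP: "\<forall>k<K. prob_space (muP k) \<and> sets (muP k) = sets borel" and "K \<noteq> 0"
    and Xi: "prob_space Xi" and n: "n < N"
    and G: "(\<lambda>(P, x). G P x) \<in> borel_measurable (borel \<Otimes>\<^sub>M Xi)"
  shows "(\<integral>\<^sup>+ (Ps, ks, x). G (Ps (ks n)) x
      \<partial>(PiM {..<K} muP \<Otimes>\<^sub>M (PiM {..<N} (\<lambda>_. measure_pmf (pmf_of_set {..<K})) \<Otimes>\<^sub>M Xi)))
    = (\<Sum>k<K. \<integral>\<^sup>+ P. \<integral>\<^sup>+ x. G P x \<partial>Xi \<partial>muP k) / of_nat K"
proof -
  define KS where "KS = PiM {..<N} (\<lambda>_. measure_pmf (pmf_of_set {..<K}))"
  define Gx where "Gx P = (\<integral>\<^sup>+ x. G P x \<partial>Xi)" for P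
  interpret Xi: prob_space Xi by (rule Xi)
  interpret KS: prob_space KS unfolding KS_def by (intro prob_space_PiM prob_space_measure_pmf)
  interpret KX: pair_prob_space KS Xi ..
  have Gx_meas: "Gx \<in> borel_measurable borel"
    unfolding Gx_def using Xi.borel_measurable_nn_integral[OF G] by simp
  have Gx_component: "(\<lambda>Ps. Gx (Ps k)) \<in> borel_measurable (PiM {..<K} muP)" if "k < K" for k
  proof -
    have "(\<lambda>Ps. Ps k) \<in> borel_measurable (PiM {..<K} muP)"
      using muP that by (intro borel_measurable_PiM_component) auto
    from measurable_compose[OF this Gx_meas] show ?thesis .
  qed
  have select: "(\<lambda>(Ps, ks, x). G (Ps (ks n)) x) \<in> borel_measurable (PiM {..<K} muP \<Otimes>\<^sub>M (KS \<Otimes>\<^sub>M Xi))"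
    using measurable_compose[OF measurable_uniform_select[of K muP n N Xi] G] muP n
    unfolding KS_def by (simp add: split_beta')
  have inner: "(\<integral>\<^sup>+ q. (\<lambda>(ks, x). G (Ps (ks n)) x) q \<partial>(KS \<Otimes>\<^sub>M Xi)) = (\<Sum>k<K. Gx (Ps k)) / of_nat K"
    if "Ps \<in> space (PiM {..<K} muP)" for Ps
  proof -
    have "(\<lambda>(ks, x). G (Ps (ks n)) x) \<in> borel_measurable (KS \<Otimes>\<^sub>M Xi)"
      using measurable_Pair2[OF select that] by (simp add: split_beta')
    then have "(\<integral>\<^sup>+ q. (\<lambda>(ks, x). G (Ps (ks n)) x) q \<partial>(KS \<Otimes>\<^sub>M Xi)) = (\<integral>\<^sup>+ ks. Gx (Ps (ks n)) \<partial>KS)"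
      unfolding Gx_def by (simp add: Xi.nn_integral_fst[symmetric])
    also have "\<dots> = (\<Sum>k<K. Gx (Ps k)) / of_nat K"
      unfolding KS_def using n \<open>K \<noteq> 0\<close> by (subst nn_integral_PiM_pmf_of_set_component) auto
    finally show ?thesis .
  qed
  have "(\<integral>\<^sup>+ (Ps, ks, x). G (Ps (ks n)) x \<partial>(PiM {..<K} muP \<Otimes>\<^sub>M (KS \<Otimes>\<^sub>M Xi)))
      = (\<integral>\<^sup>+ Ps. (\<Sum>k<K. Gx (Ps k)) / of_nat K \<partial>PiM {..<K} muP)"
    using KX.P.nn_integral_fst[OF select, symmetric] inner by (simp cong: nn_integral_cong)
  also have "\<dots> = (\<integral>\<^sup>+ Ps. (\<Sum>k<K. Gx (Ps k)) \<partial>PiM {..<K} muP) / of_nat K"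
    using Gx_component by (intro nn_integral_divide borel_measurable_sum) auto
  also have "\<dots> = (\<Sum>k<K. \<integral>\<^sup>+ Ps. Gx (Ps k) \<partial>PiM {..<K} muP) / of_nat K"
    using Gx_component by (subst nn_integral_sum) auto
  also have "\<dots> = (\<Sum>k<K. \<integral>\<^sup>+ P. Gx P \<partial>muP k) / of_nat K"
    using muP Gx_meas measurable_cong_sets[OF refl, of _ borel]
    by (intro arg_cong2[where f = "(/)"] sum.cong refl nn_integral_PiM_component) auto
  finally show ?thesis unfolding KS_def Gx_def .
qed

lemma nn_integral_round_space:
  assumes W: "sets muW = sets borel"
    and muP: "\<forall>k<K. prob_space (muP k) \<and> sets (muP k) = sets borel" and "K \<noteq> 0"
    and D: "\<forall>n<N. \<forall>j<J. prob_space (D n j)" and n: "n < N"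
    and H: "(\<lambda>(W, P, x). H W P x)
      \<in> borel_measurable (borel \<Otimes>\<^sub>M (borel \<Otimes>\<^sub>M PiM ({..<N} \<times> {..<J}) (\<lambda>(n, j). D n j)))"
  shows "(\<integral>\<^sup>+ (W, Ps, ks, x). H W (Ps (ks n)) x \<partial>round_space muW muP D N K J)
    = (\<integral>\<^sup>+ W. (\<Sum>k<K. \<integral>\<^sup>+ P. \<integral>\<^sup>+ x. H W P x \<partial>PiM ({..<N} \<times> {..<J}) (\<lambda>(n, j). D n j) \<partial>muP k)
        / of_nat K \<partial>muW)"
proof -
  let ?Xi = "PiM ({..<N} \<times> {..<J}) (\<lambda>(n, j). D n j)"
  let ?R = "PiM {..<K} muP \<Otimes>\<^sub>M (PiM {..<N} (\<lambda>_. measure_pmf (pmf_of_set {..<K})) \<Otimes>\<^sub>M ?Xi)"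
  interpret R: prob_space ?R by (rule prob_space_round_noise) (use muP D in auto)
  have Xi: "prob_space ?Xi" using D by (intro prob_space_PiM) auto
  have "(\<lambda>(W, Ps, ks, x). H W (Ps (ks n)) x) \<in> borel_measurable (muW \<Otimes>\<^sub>M ?R)"
    using measurable_compose[OF measurable_round_select[OF W _ n] H] muP
    by (simp add: round_space_def split_beta')
  from R.nn_integral_fst[OF this, symmetric]
  have "(\<integral>\<^sup>+ (W, Ps, ks, x). H W (Ps (ks n)) x \<partial>round_space muW muP D N K J)
      = (\<integral>\<^sup>+ W. \<integral>\<^sup>+ (Ps, ks, x). H W (Ps (ks n)) x \<partial>?R \<partial>muW)"
    by (simp add: round_space_def)
  also have "\<dots> = (\<integral>\<^sup>+ W. (\<Sum>k<K. \<integral>\<^sup>+ P. \<integral>\<^sup>+ x. H W P x \<partial>?Xi \<partial>muP k) / of_nat K \<partial>muW)"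
    using muP \<open>K \<noteq> 0\<close> Xi n measurable_Pair2[OF H]
    by (intro nn_integral_cong nn_integral_uniform_select) (auto simp: split_beta')
  finally show ?thesis .
qed

lemma nn_integral_round_space_fst:
  assumes "\<forall>k<K. prob_space (muP k)" "\<forall>n<N. \<forall>j<J. prob_space (D n j)" "f \<in> borel_measurable muW"
  shows "(\<integral>\<^sup>+ \<omega>. f (fst \<omega>) \<partial>round_space muW muP D N K J) = (\<integral>\<^sup>+ W. f W \<partial>muW)"
proof -
  interpret R: prob_space "PiM {..<K} muP \<Otimes>\<^sub>M
      (PiM {..<N} (\<lambda>_. measure_pmf (pmf_of_set {..<K})) \<Otimes>\<^sub>M PiM ({..<N} \<times> {..<J}) (\<lambda>(n, j). D n j))"
    by (rule prob_space_round_noise) (use assms in auto)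
  show ?thesis
    using R.nn_integral_fst[of "\<lambda>\<omega>. f (fst \<omega>)" muW] assms(3)
    by (simp add: round_space_def R.emeasure_space_1)
qed

section \<open>Local steps of one client\<close>

locale fedkrso_local =
  fixes g :: "nat \<Rightarrow> real^'dn^'dm \<Rightarrow> 's \<Rightarrow> real^'dn^'dm"
    and D :: "nat \<Rightarrow> nat \<Rightarrow> 's measure"
    and gradF :: "nat \<Rightarrow> real^'dn^'dm \<Rightarrow> real^'dn^'dm"
    and N J :: nat and L eta sigma c :: real
  assumes grad_lipschitz: "\<forall>n<N. \<forall>W1 W2. norm (gradF n W1 - gradF n W2) \<le> L * norm (W1 - W2)"
    and sample_prob: "\<forall>n<N. \<forall>j<J. prob_space (D n j)"
    and sample_measurable: "\<forall>n<N. \<forall>j<J. (\<lambda>(W, s). g n W s) \<in> borel_measurable (borel \<Otimes>\<^sub>M D n j)"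
    and sample_integrable: "\<forall>n<N. \<forall>j<J. \<forall>W. integrable (D n j) (g n W)"
    and sample_unbiased: "\<forall>n<N. \<forall>j<J. \<forall>W. (\<integral>s. g n W s \<partial>D n j) = gradF n W"
    and sample_variance: "\<forall>n<N. \<forall>j<J. \<forall>W.
      (\<integral>\<^sup>+ s. ennreal ((norm (g n W s - gradF n W))\<^sup>2) \<partial>D n j) \<le> ennreal (sigma\<^sup>2)"
    and L_nonneg: "0 \<le> L" and eta_nonneg: "0 \<le> eta" and J_pos: "1 \<le> J"
    and eta_small: "eta * c * L \<le> 1 / (16 * real J)"
begin

definition samples :: "(nat \<times> nat \<Rightarrow> 's) measure" where
  "samples = PiM ({..<N} \<times> {..<J}) (\<lambda>(n, j). D n j)"

definition growth :: real where
  "growth = (1 + 1 / real J) * (1 + 1 / (16 * real J))\<^sup>2"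

definition step_offset :: "nat \<Rightarrow> real^'dn^'dm \<Rightarrow> real^'dn^'r \<Rightarrow> real" where
  "step_offset n W P = (1 + real J) * eta\<^sup>2 * (norm (gradF n W ** (transpose P ** P)))\<^sup>2 + eta\<^sup>2 * c\<^sup>2 * sigma\<^sup>2"

lemma step_offset_nonneg: "0 \<le> step_offset n W P"
  by (simp add: step_offset_def)

lemma one_le_growth: "1 \<le> growth"
proof -
  have "1 \<le> 1 + 1 / real J" "1 \<le> (1 + 1 / (16 * real J))\<^sup>2" by (auto intro: one_le_power)
  from mult_mono[OF this] show ?thesis unfolding growth_def by simp
qed

lemma prob_space_samples: "prob_space samples"
  unfolding samples_def using sample_prob by (intro prob_space_PiM) auto

lemma borel_measurable_gradF:
  assumes "n < N"
  shows "gradF n \<in> borel_measurable borel"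
proof -
  have "L-lipschitz_on UNIV (gradF n)"
    using grad_lipschitz assms L_nonneg by (intro lipschitz_onI) (auto simp: dist_norm)
  then show ?thesis by (intro borel_measurable_continuous_onI lipschitz_on_continuous_on)
qed

lemma measurable_factor_norm_sq:
  assumes "n < N" "j \<le> J" "w \<in> borel_measurable M" "p \<in> borel_measurable M" "x \<in> M \<rightarrow>\<^sub>M samples"
  shows "(\<lambda>m. ennreal ((norm (fedkrso_B eta g (w m) (p m) (x m) n j ** p m))\<^sup>2)) \<in> borel_measurable M"
proof -
  have "(\<lambda>m. fedkrso_B eta g (w m) (p m) (x m) n j) \<in> borel_measurable M"
    using assms unfolding samples_def by (intro measurable_fedkrso_B[OF sample_measurable]) auto
  then show ?thesis using assms(4) by measurable
qed

lemma measurable_factor_triple: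
  assumes "n < N" "j \<le> J"
  shows "(\<lambda>z. ennreal ((norm (fedkrso_B eta g (fst z) (fst (snd z)) (snd (snd z)) n j ** fst (snd z)))\<^sup>2))
    \<in> borel_measurable (borel \<Otimes>\<^sub>M (borel \<Otimes>\<^sub>M samples))"
  by (rule measurable_factor_norm_sq[OF assms]) measurable

lemma expected_local_step_le:
  assumes n: "n < N" and j: "j < J" and P: "orthogonal_rows P c"
  shows "(\<integral>\<^sup>+ y. ennreal ((norm (X - eta *\<^sub>R (g n (W + X) y ** (transpose P ** P))))\<^sup>2) \<partial>D n j)
    \<le> ennreal (growth * (norm X)\<^sup>2 + step_offset n W P)"
proof -
  interpret P: orthogonal_rows P c by (rule P)
  let ?M = "transpose P ** P"
  have "(\<integral>\<^sup>+ y. ennreal ((norm (X - eta *\<^sub>R (g n (W + X) y ** ?M)))\<^sup>2) \<partial>D n j)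
      \<le> ennreal ((norm (X - eta *\<^sub>R (gradF n (W + X) ** ?M)))\<^sup>2 + (eta * c)\<^sup>2 * sigma\<^sup>2)"
  proof (rule nn_integral_norm_sq_sub_linear_le[where T = "\<lambda>A. eta *\<^sub>R (A ** ?M)"])
    show "bounded_linear (\<lambda>A. eta *\<^sub>R (A ** ?M))"
      by (intro bounded_linear_compose[OF bounded_linear_scaleR_right] bounded_linear_matrix_mult_left)
    show "norm (eta *\<^sub>R (A ** ?M)) \<le> eta * c * norm A" for A
      using P.norm_mult_gram_le[of A] eta_nonneg by (simp add: mult.assoc mult_left_mono)
  qed (use sample_prob sample_integrable sample_unbiased sample_variance n j in auto)
  also have "\<dots> \<le> ennreal (growth * (norm X)\<^sup>2 + step_offset n W P)"
  proof (rule ennreal_leI)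
    have growth_ge: "(1 + 1 / real J) * (1 + eta * c * L)\<^sup>2 \<le> growth"
      unfolding growth_def using eta_small eta_nonneg L_nonneg P.scale_nonneg
      by (intro mult_left_mono power_mono) auto
    have "(norm (X - eta *\<^sub>R (gradF n (W + X) ** ?M)))\<^sup>2
        \<le> (1 + 1 / real J) * (1 + eta * c * L)\<^sup>2 * (norm X)\<^sup>2
          + (1 + 1 / (1 / real J)) * eta\<^sup>2 * (norm (gradF n W ** ?M))\<^sup>2"
      using grad_lipschitz n P.scale_nonneg eta_nonneg J_pos
      by (intro norm_sq_lipschitz_step_le[where T = "\<lambda>A. A ** ?M"] P.norm_mult_gram_le
          bounded_linear.linear[OF bounded_linear_matrix_mult_left]) auto
    also have "\<dots> \<le> growth * (norm X)\<^sup>2 + (1 + real J) * eta\<^sup>2 * (norm (gradF n W ** ?M))\<^sup>2"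
      using growth_ge by (simp add: mult_right_mono)
    finally show "(norm (X - eta *\<^sub>R (gradF n (W + X) ** ?M)))\<^sup>2 + (eta * c)\<^sup>2 * sigma\<^sup>2
        \<le> growth * (norm X)\<^sup>2 + step_offset n W P"
      unfolding step_offset_def by (simp add: power_mult_distrib)
  qed
  finally show ?thesis .
qed

lemma expected_factor_Suc_le:
  assumes n: "n < N" and j: "j < J" and P: "orthogonal_rows P c"
  shows "(\<integral>\<^sup>+ x. ennreal ((norm (fedkrso_B eta g W P x n (Suc j) ** P))\<^sup>2) \<partial>samples)
    \<le> ennreal growth * (\<integral>\<^sup>+ x. ennreal ((norm (fedkrso_B eta g W P x n j ** P))\<^sup>2) \<partial>samples)
      + ennreal (step_offset n W P)"
proof -
  let ?X = "\<lambda>x. fedkrso_B eta g W P x n j ** P"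
  let ?rest = "PiM ({..<N} \<times> {..<J} - {(n, j)}) (\<lambda>(n, j). D n j)"
  interpret Dnj: prob_space "D n j" using sample_prob n j by simp
  have upd: "?X (x((n, j) := y)) = ?X x" for x y by (simp add: fedkrso_B_fun_upd)
  \<comment> \<open>integrate out the sample of step j first; the factor at step j does not depend on it\<close>
  have fubini: "(\<integral>\<^sup>+ x. f x \<partial>samples) = (\<integral>\<^sup>+ x. \<integral>\<^sup>+ y. f (x((n, j) := y)) \<partial>D n j \<partial>?rest)"
    if "f \<in> borel_measurable samples" for f
    using that n j sample_prob unfolding samples_def
    by (subst nn_integral_PiM_fun_upd) (auto intro: prob_space_imp_sigma_finite)
  have meas: "(\<lambda>x. ennreal ((norm (fedkrso_B eta g W P x n i ** P))\<^sup>2)) \<in> borel_measurable samples"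
    if "i \<le> J" for i
    using that by (intro measurable_factor_norm_sq[OF n]) auto
  have "(\<integral>\<^sup>+ x. ennreal ((norm (fedkrso_B eta g W P x n (Suc j) ** P))\<^sup>2) \<partial>samples)
      = (\<integral>\<^sup>+ x. \<integral>\<^sup>+ y. ennreal ((norm (fedkrso_B eta g W P (x((n, j) := y)) n (Suc j) ** P))\<^sup>2)
          \<partial>D n j \<partial>?rest)"
    using j by (intro fubini meas) simp
  also have "\<dots> = (\<integral>\<^sup>+ x. \<integral>\<^sup>+ y. ennreal ((norm (?X x - eta *\<^sub>R (g n (W + ?X x) y ** (transpose P ** P))))\<^sup>2)
      \<partial>D n j \<partial>?rest)"
    by (simp only: fedkrso_B_Suc_mult upd fun_upd_same)
  also have "\<dots> \<le> (\<integral>\<^sup>+ x. ennreal (growth * (norm (?X x))\<^sup>2 + step_offset n W P) \<partial>?rest)"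
    by (intro nn_integral_mono expected_local_step_le[OF n j P])
  also have "\<dots> = (\<integral>\<^sup>+ x. ennreal growth * ennreal ((norm (?X x))\<^sup>2) + ennreal (step_offset n W P) \<partial>samples)"
    using meas[of j] j one_le_growth step_offset_nonneg[of n W P]
    by (subst fubini) (auto simp: upd Dnj.emeasure_space_1 ennreal_mult ennreal_plus)
  also have "\<dots> = ennreal growth * (\<integral>\<^sup>+ x. ennreal ((norm (?X x))\<^sup>2) \<partial>samples) + ennreal (step_offset n W P)"
    using meas[of j] j prob_space_samples
    by (simp add: nn_integral_add nn_integral_cmult prob_space.emeasure_space_1)
  finally show ?thesis .
qed

lemma expected_factor_le:
  assumes "n < N" "orthogonal_rows P c" "j \<le> J"
  shows "(\<integral>\<^sup>+ x. ennreal ((norm (fedkrso_B eta g W P x n j ** P))\<^sup>2) \<partial>samples)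
    \<le> ennreal ((\<Sum>i<j. growth ^ i) * step_offset n W P)"
  using assms
  by (intro ennreal_affine_recursion_le[where e = "\<lambda>j. \<integral>\<^sup>+ x. ennreal ((norm (fedkrso_B eta g W P x n j ** P))\<^sup>2) \<partial>samples"]
      expected_factor_Suc_le) (auto intro: step_offset_nonneg order_trans[OF _ one_le_growth])

lemma sum_expected_factor_le:
  assumes "n < N" "orthogonal_rows P c"
  shows "(\<Sum>j<J. \<integral>\<^sup>+ x. ennreal ((norm (fedkrso_B eta g W P x n j ** P))\<^sup>2) \<partial>samples)
    \<le> ennreal (4 * (real J)\<^sup>2 * step_offset n W P)"
proof -
  have "(\<Sum>j<J. \<integral>\<^sup>+ x. ennreal ((norm (fedkrso_B eta g W P x n j ** P))\<^sup>2) \<partial>samples)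
      \<le> (\<Sum>j<J. ennreal ((\<Sum>i<j. growth ^ i) * step_offset n W P))"
    using assms by (intro sum_mono expected_factor_le) auto
  also have "\<dots> = ennreal ((\<Sum>j<J. \<Sum>i<j. growth ^ i) * step_offset n W P)"
    using step_offset_nonneg[of n W P] one_le_growth
    by (subst sum_ennreal) (auto simp: sum_distrib_right intro!: mult_nonneg_nonneg sum_nonneg)
  also have "\<dots> \<le> ennreal (4 * (real J)\<^sup>2 * step_offset n W P)"
    using sum_partial_geometric_le[OF one_le_growth growth_factor_power_le[of J, folded growth_def]]
      step_offset_nonneg[of n W P]
    by (intro ennreal_leI mult_right_mono)
  finally show ?thesis .
qed

lemma step_offset_le:
  assumes "orthogonal_rows P c"
  shows "4 * (real J)\<^sup>2 * step_offset n W P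
    \<le> 8 * real J ^ 3 * eta\<^sup>2 * c * inner (gradF n W) (gradF n W ** (transpose P ** P))
      + 4 * (real J)\<^sup>2 * eta\<^sup>2 * c\<^sup>2 * sigma\<^sup>2"
proof -
  interpret orthogonal_rows P c by (rule assms)
  have q_nonneg: "0 \<le> eta\<^sup>2 * c * inner (gradF n W) (gradF n W ** (transpose P ** P))"
    unfolding inner_mult_gram using scale_nonneg by (intro mult_nonneg_nonneg) auto
  have "4 * (real J)\<^sup>2 * (1 + real J) \<le> 8 * real J ^ 3"
    using J_pos by (simp add: power2_eq_square power3_eq_cube algebra_simps)
  from mult_right_mono[OF this q_nonneg] show ?thesis
    by (simp add: step_offset_def norm_mult_gram_sq algebra_simps)
qed

lemma expected_sum_factor_le:
  assumes n: "n < N" and mu: "prob_space mu" and rows: "AE P in mu. orthogonal_rows P c"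
    and mean: "integrable mu (\<lambda>P. transpose P ** P)" "(\<integral>P. transpose P ** P \<partial>mu) = mat 1"
  shows "(\<integral>\<^sup>+ P. (\<Sum>j<J. \<integral>\<^sup>+ x. ennreal ((norm (fedkrso_B eta g W P x n j ** P))\<^sup>2) \<partial>samples) \<partial>mu)
    \<le> ennreal (8 * real J ^ 3 * eta\<^sup>2 * c * (norm (gradF n W))\<^sup>2 + 4 * (real J)\<^sup>2 * eta\<^sup>2 * c\<^sup>2 * sigma\<^sup>2)"
proof -
  interpret mu: prob_space mu by (rule mu)
  let ?G = "gradF n W"
  let ?q = "\<lambda>P. inner ?G (?G ** (transpose P ** P))"
  define a where "a = 8 * real J ^ 3 * eta\<^sup>2 * c"
  define b where "b = 4 * (real J)\<^sup>2 * eta\<^sup>2 * c\<^sup>2 * sigma\<^sup>2"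
  have q_linear: "bounded_linear (\<lambda>Y. inner ?G (?G ** Y))"
    by (rule bounded_linear_compose[OF bounded_linear_inner_right bounded_linear_matrix_mult_right])
  have q_int: "integrable mu ?q" by (rule integrable_bounded_linear[OF q_linear mean(1)])
  have q_mean: "(\<integral>P. ?q P \<partial>mu) = (norm ?G)\<^sup>2"
    using integral_bounded_linear[OF q_linear mean(1)] mean(2) by (simp add: power2_norm_eq_inner)
  have bound: "AE P in mu. (\<Sum>j<J. \<integral>\<^sup>+ x. ennreal ((norm (fedkrso_B eta g W P x n j ** P))\<^sup>2) \<partial>samples)
      \<le> ennreal (a * ?q P + b) \<and> 0 \<le> a * ?q P + b"
    using rows
  proof eventually_elim
    case (elim P)
    have le: "4 * (real J)\<^sup>2 * step_offset n W P \<le> a * ?q P + b"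
      unfolding a_def b_def by (rule step_offset_le[OF elim])
    have "0 \<le> 4 * (real J)\<^sup>2 * step_offset n W P" using step_offset_nonneg[of n W P] by simp
    with le have nonneg: "0 \<le> a * ?q P + b" by linarith
    have "(\<Sum>j<J. \<integral>\<^sup>+ x. ennreal ((norm (fedkrso_B eta g W P x n j ** P))\<^sup>2) \<partial>samples)
        \<le> ennreal (4 * (real J)\<^sup>2 * step_offset n W P)"
      by (rule sum_expected_factor_le[OF n elim])
    also have "\<dots> \<le> ennreal (a * ?q P + b)" using le by (rule ennreal_leI)
    finally show ?case using nonneg by simp
  qed
  have "(\<integral>\<^sup>+ P. (\<Sum>j<J. \<integral>\<^sup>+ x. ennreal ((norm (fedkrso_B eta g W P x n j ** P))\<^sup>2) \<partial>samples) \<partial>mu)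
      \<le> (\<integral>\<^sup>+ P. ennreal (a * ?q P + b) \<partial>mu)"
    using bound by (intro nn_integral_mono_AE) auto
  also have "\<dots> = ennreal (\<integral>P. a * ?q P + b \<partial>mu)"
    using bound q_int by (intro nn_integral_eq_integral) auto
  also have "(\<integral>P. a * ?q P + b \<partial>mu) = a * (norm ?G)\<^sup>2 + b"
    using q_int q_mean by (simp add: mu.prob_space)
  finally show ?thesis unfolding a_def b_def .
qed

end

section \<open>Averaging over projections, index draws and clients\<close>

locale fedkrso_round = fedkrso_local g D gradF N J L eta sigma c
  for g :: "nat \<Rightarrow> real^'dn^'dm \<Rightarrow> 's \<Rightarrow> real^'dn^'dm" and D gradF N J L eta sigma c +
  fixes muW :: "(real^'dn^'dm) measure" and muP :: "nat \<Rightarrow> (real^'dn^'r) measure" and K :: nat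
  assumes model_prob: "prob_space muW" and model_sets: "sets muW = sets borel"
    and proj_prob: "\<forall>k<K. prob_space (muP k) \<and> sets (muP k) = sets borel"
    and proj_rows: "\<forall>k<K. AE P in muP k. P ** transpose P = c *\<^sub>R mat 1"
    and proj_mean: "\<forall>k<K. integrable (muP k) (\<lambda>P. transpose P ** P)
      \<and> (\<integral>P. transpose P ** P \<partial>muP k) = mat 1"
    and K_pos: "1 \<le> K"
begin

lemma proj_scale_nonneg: "0 \<le> c"
proof -
  interpret prob_space "muP 0" using proj_prob K_pos by auto
  have "AE P in muP 0. P ** transpose P = c *\<^sub>R mat 1" using proj_rows K_pos by auto
  then have "AE P in muP 0. 0 \<le> c"
    by (rule eventually_mono) (rule orthogonal_rows.scale_nonneg[OF orthogonal_rows.intro])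
  then show ?thesis by simp
qed

lemma nn_integral_client_terms:
  assumes n: "n < N"
  shows "(\<Sum>j<J. \<integral>\<^sup>+ \<omega>. ennreal (fedkrso_term eta g n j \<omega>) \<partial>round_space muW muP D N K J)
    = (\<integral>\<^sup>+ W. (\<Sum>k<K. \<integral>\<^sup>+ P.
        (\<Sum>j<J. \<integral>\<^sup>+ x. ennreal ((norm (fedkrso_B eta g W P x n j ** P))\<^sup>2) \<partial>samples) \<partial>muP k) / of_nat K \<partial>muW)"
proof -
  let ?\<Omega> = "round_space muW muP D N K J"
  define H where "H W (P :: real^'dn^'r) x = (\<Sum>j<J. ennreal ((norm (fedkrso_B eta g W P x n j ** P))\<^sup>2))"
    for W P x
  have "(\<lambda>z. H (fst z) (fst (snd z)) (snd (snd z))) \<in> borel_measurable (borel \<Otimes>\<^sub>M (borel \<Otimes>\<^sub>M samples))"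
    unfolding H_def by (intro borel_measurable_sum measurable_factor_triple[OF n]) auto
  then have H_meas: "(\<lambda>(W, P, x). H W P x) \<in> borel_measurable (borel \<Otimes>\<^sub>M (borel \<Otimes>\<^sub>M samples))"
    by (simp add: split_beta')
  have select: "(\<lambda>(W, Ps, ks, x). (W, Ps (ks n), x)) \<in> ?\<Omega> \<rightarrow>\<^sub>M borel \<Otimes>\<^sub>M (borel \<Otimes>\<^sub>M samples)"
    unfolding samples_def using proj_prob by (intro measurable_round_select[OF model_sets _ n]) auto
  have "(\<lambda>\<omega>. ennreal (fedkrso_term eta g n j \<omega>)) \<in> borel_measurable ?\<Omega>" if "j < J" for j
    using measurable_compose[OF select measurable_factor_triple[OF n]] that
    by (simp add: fedkrso_term_def split_beta')
  then have "(\<Sum>j<J. \<integral>\<^sup>+ \<omega>. ennreal (fedkrso_term eta g n j \<omega>) \<partial>?\<Omega>)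
      = (\<integral>\<^sup>+ (W, Ps, ks, x). H W (Ps (ks n)) x \<partial>?\<Omega>)"
    by (subst nn_integral_sum[symmetric]) (auto intro!: nn_integral_cong simp: fedkrso_term_def H_def)
  also have "\<dots> = (\<integral>\<^sup>+ W. (\<Sum>k<K. \<integral>\<^sup>+ P. \<integral>\<^sup>+ x. H W P x \<partial>samples \<partial>muP k) / of_nat K \<partial>muW)"
    using nn_integral_round_space[OF model_sets proj_prob _ sample_prob n H_meas[unfolded samples_def]] K_pos
    unfolding samples_def by simp
  also have "\<dots> = (\<integral>\<^sup>+ W. (\<Sum>k<K. \<integral>\<^sup>+ P.
      (\<Sum>j<J. \<integral>\<^sup>+ x. ennreal ((norm (fedkrso_B eta g W P x n j ** P))\<^sup>2) \<partial>samples) \<partial>muP k) / of_nat K \<partial>muW)"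
    unfolding H_def by (intro nn_integral_cong sum.cong arg_cong2[where f = "(/)"] refl nn_integral_sum
        measurable_factor_norm_sq[OF n]) auto
  finally show ?thesis .
qed

lemma client_sum_bound:
  assumes n: "n < N"
  shows "(\<Sum>j<J. \<integral>\<^sup>+ \<omega>. ennreal (fedkrso_term eta g n j \<omega>) \<partial>round_space muW muP D N K J)
    \<le> (\<integral>\<^sup>+ W. ennreal (8 * real J ^ 3 * eta\<^sup>2 * c * (norm (gradF n W))\<^sup>2
        + 4 * (real J)\<^sup>2 * eta\<^sup>2 * c\<^sup>2 * sigma\<^sup>2) \<partial>muW)"
  unfolding nn_integral_client_terms[OF n]
proof (rule nn_integral_mono)
  fix W
  let ?r = "8 * real J ^ 3 * eta\<^sup>2 * c * (norm (gradF n W))\<^sup>2 + 4 * (real J)\<^sup>2 * eta\<^sup>2 * c\<^sup>2 * sigma\<^sup>2"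
  have "(\<Sum>k<K. \<integral>\<^sup>+ P. (\<Sum>j<J. \<integral>\<^sup>+ x. ennreal ((norm (fedkrso_B eta g W P x n j ** P))\<^sup>2) \<partial>samples) \<partial>muP k)
      \<le> (\<Sum>k<K. ennreal ?r)"
    using proj_prob proj_rows proj_mean
    by (intro sum_mono expected_sum_factor_le[OF n]) (auto simp: orthogonal_rows_def)
  then have "(\<Sum>k<K. \<integral>\<^sup>+ P. (\<Sum>j<J. \<integral>\<^sup>+ x. ennreal ((norm (fedkrso_B eta g W P x n j ** P))\<^sup>2) \<partial>samples) \<partial>muP k)
      / of_nat K \<le> of_nat K * ennreal ?r / of_nat K"
    by (intro divide_right_mono_ennreal) simp
  also have "\<dots> = ennreal ?r"
    using K_pos ennreal_mult_divide_eq[of "of_nat K" "ennreal ?r"] by (simp add: mult.commute)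
  finally show "(\<Sum>k<K. \<integral>\<^sup>+ P. (\<Sum>j<J. \<integral>\<^sup>+ x. ennreal ((norm (fedkrso_B eta g W P x n j ** P))\<^sup>2)
      \<partial>samples) \<partial>muP k) / of_nat K \<le> ennreal ?r" .
qed

lemma average_bound:
  assumes N: "1 \<le> N"
    and hetero: "\<forall>W. (\<Sum>n<N. (norm (gradF n W))\<^sup>2) / real N \<le> vsig\<^sup>2 + (norm (G W))\<^sup>2"
    and G: "G \<in> borel_measurable borel"
  shows "ennreal (1 / real N) *
      (\<Sum>n<N. \<Sum>j<J. \<integral>\<^sup>+ \<omega>. ennreal (fedkrso_term eta g n j \<omega>) \<partial>round_space muW muP D N K J)
    \<le> ennreal (8 * real J ^ 3 * eta\<^sup>2 * c * vsig\<^sup>2)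
      + ennreal (8 * real J ^ 3 * eta\<^sup>2 * c)
        * (\<integral>\<^sup>+ \<omega>. ennreal ((norm (G (fst \<omega>)))\<^sup>2) \<partial>round_space muW muP D N K J)
      + ennreal (4 * (real J)\<^sup>2 * eta\<^sup>2 * c\<^sup>2 * sigma\<^sup>2)"
proof -
  interpret muW: prob_space muW by (rule model_prob)
  define a where "a = 8 * real J ^ 3 * eta\<^sup>2 * c"
  define b where "b = 4 * (real J)\<^sup>2 * eta\<^sup>2 * c\<^sup>2 * sigma\<^sup>2"
  define r where "r n W = a * (norm (gradF n W))\<^sup>2 + b" for n W
  have a_nonneg: "0 \<le> a" and b_nonneg: "0 \<le> b"
    unfolding a_def b_def using proj_scale_nonneg by auto
  have r_meas: "(\<lambda>W. ennreal (r n W)) \<in> borel_measurable muW" if "n < N" for n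
    unfolding r_def measurable_cong_sets[OF model_sets refl]
    using borel_measurable_gradF[OF that] by measurable
  have G_meas: "(\<lambda>W. ennreal ((norm (G W))\<^sup>2)) \<in> borel_measurable muW"
    unfolding measurable_cong_sets[OF model_sets refl] using G by measurable
  have pointwise: "ennreal (1 / real N) * (\<Sum>n<N. ennreal (r n W))
      \<le> ennreal (a * vsig\<^sup>2) + ennreal a * ennreal ((norm (G W))\<^sup>2) + ennreal b" for W
  proof -
    have "(\<Sum>n<N. r n W) / real N = a * ((\<Sum>n<N. (norm (gradF n W))\<^sup>2) / real N) + b"
      using N unfolding r_def by (simp add: sum.distrib sum_distrib_left[symmetric] field_simps)
    also have "\<dots> \<le> a * (vsig\<^sup>2 + (norm (G W))\<^sup>2) + b"
      using hetero a_nonneg by (intro add_right_mono mult_left_mono) auto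
    finally show ?thesis
      using a_nonneg b_nonneg
      by (simp add: r_def sum_nonneg ennreal_mult'[symmetric] ennreal_plus[symmetric] distrib_left
          del: ennreal_plus)
  qed
  have "ennreal (1 / real N) *
      (\<Sum>n<N. \<Sum>j<J. \<integral>\<^sup>+ \<omega>. ennreal (fedkrso_term eta g n j \<omega>) \<partial>round_space muW muP D N K J)
      \<le> ennreal (1 / real N) * (\<Sum>n<N. \<integral>\<^sup>+ W. ennreal (r n W) \<partial>muW)"
    using client_sum_bound unfolding r_def a_def b_def by (intro mult_left_mono sum_mono) auto
  also have "\<dots> = ennreal (1 / real N) * (\<integral>\<^sup>+ W. (\<Sum>n<N. ennreal (r n W)) \<partial>muW)"
    using r_meas by (subst nn_integral_sum) auto
  also have "\<dots> = (\<integral>\<^sup>+ W. ennreal (1 / real N) * (\<Sum>n<N. ennreal (r n W)) \<partial>muW)"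
    using r_meas by (intro nn_integral_cmult[symmetric] borel_measurable_sum) auto
  also have "\<dots> \<le> (\<integral>\<^sup>+ W. ennreal (a * vsig\<^sup>2) + ennreal a * ennreal ((norm (G W))\<^sup>2) + ennreal b \<partial>muW)"
    by (intro nn_integral_mono pointwise)
  also have "\<dots> = ennreal (a * vsig\<^sup>2) + ennreal a * (\<integral>\<^sup>+ W. ennreal ((norm (G W))\<^sup>2) \<partial>muW) + ennreal b"
    using G_meas by (simp add: nn_integral_add nn_integral_cmult muW.emeasure_space_1)
  also have "(\<integral>\<^sup>+ W. ennreal ((norm (G W))\<^sup>2) \<partial>muW)
      = (\<integral>\<^sup>+ \<omega>. ennreal ((norm (G (fst \<omega>)))\<^sup>2) \<partial>round_space muW muP D N K J)"
    using proj_prob sample_prob G_meas by (intro nn_integral_round_space_fst[symmetric]) auto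
  finally show ?thesis unfolding a_def b_def .
qed

end

lemma gradient_average_eq:
  fixes f :: "nat \<Rightarrow> 'a::euclidean_space \<Rightarrow> real"
  assumes "N \<noteq> 0" and "\<forall>n<N. (f n has_derivative (\<lambda>H. v n \<bullet> H)) (at W)"
    and "((\<lambda>V. (\<Sum>n<N. f n V) / real N) has_derivative (\<lambda>H. G \<bullet> H)) (at W)"
  shows "G = (1 / real N) *\<^sub>R (\<Sum>n<N. v n)"
proof -
  have "((\<lambda>V. (\<Sum>n<N. f n V) / real N) has_derivative (\<lambda>H. (\<Sum>n<N. v n \<bullet> H) / real N)) (at W)"
    using assms(1,2) by (auto intro!: derivative_eq_intros)
  from has_derivative_unique[OF assms(3) this]
  have "G \<bullet> H = ((1 / real N) *\<^sub>R (\<Sum>n<N. v n)) \<bullet> H" for H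
    by (drule_tac fun_cong[of _ _ H]) (simp add: inner_sum_left)
  then show ?thesis by (metis inner_diff_left inner_eq_zero_iff eq_iff_diff_eq_0)
qed

lemma learning_rate_bound:
  fixes d r L eta :: real
  assumes eta: "0 < eta" "eta \<le> r / (16 * L * d * real J)" and "0 < d" "0 < r" "1 \<le> J"
  shows "0 < L" and "eta * (d / r) * L \<le> 1 / (16 * real J)"
proof -
  show L: "0 < L"
  proof (rule ccontr)
    assume "\<not> 0 < L"
    then have "r / (16 * L * d * real J) \<le> 0"
      using assms(3,4) by (simp add: divide_nonneg_nonpos mult_nonpos_nonneg)
    with eta show False by linarith
  qed
  have "eta * (16 * L * d * real J) \<le> r"
    using eta L assms(3,5) by (simp add: le_divide_eq)
  then show "eta * (d / r) * L \<le> 1 / (16 * real J)"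
    using assms(4,5) by (simp add: field_simps)
qed

theorem lemma2:
  fixes Fn :: "nat \<Rightarrow> real^'dn^'dm \<Rightarrow> real"
    and gradF :: "nat \<Rightarrow> real^'dn^'dm \<Rightarrow> real^'dn^'dm"
    and gradFg :: "real^'dn^'dm \<Rightarrow> real^'dn^'dm"
    and g :: "nat \<Rightarrow> real^'dn^'dm \<Rightarrow> 's \<Rightarrow> real^'dn^'dm"
    and D :: "nat \<Rightarrow> nat \<Rightarrow> 's measure"
    and muW :: "(real^'dn^'dm) measure"
    and muP :: "nat \<Rightarrow> (real^'dn^'r) measure"
    and N K J :: nat
    and L eta sigma vsig :: real
  assumes N: "N \<ge> 1" and K: "K \<ge> 1" and J: "J \<ge> 1"
    and grad: "\<forall>n<N. \<forall>W. (Fn n has_derivative (\<lambda>H. gradF n W \<bullet> H)) (at W)"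
    and gradg: "\<forall>W. ((\<lambda>V. (\<Sum>n<N. Fn n V) / real N) has_derivative (\<lambda>H. gradFg W \<bullet> H)) (at W)"
    and A1: "\<forall>n<N. \<forall>W1 W2. norm (gradF n W1 - gradF n W2) \<le> L * norm (W1 - W2)"
    and A2_prob: "\<forall>n<N. \<forall>j<J. prob_space (D n j)"
    and A2_meas: "\<forall>n<N. \<forall>j<J. (\<lambda>(W, s). g n W s) \<in> borel_measurable (borel \<Otimes>\<^sub>M D n j)"
    and A2_int: "\<forall>n<N. \<forall>j<J. \<forall>W. integrable (D n j) (g n W)"
    and A2_unb: "\<forall>n<N. \<forall>j<J. \<forall>W. (\<integral>s. g n W s \<partial>D n j) = gradF n W"
    and A2_var: "\<forall>n<N. \<forall>j<J. \<forall>W.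
        (\<integral>\<^sup>+ s. ennreal ((norm (g n W s - gradF n W))\<^sup>2) \<partial>D n j) \<le> ennreal (sigma\<^sup>2)"
    and A3: "\<forall>W. (\<Sum>n<N. (norm (gradF n W))\<^sup>2) / real N \<le> vsig\<^sup>2 + (norm (gradFg W))\<^sup>2"
    and A4_prob: "\<forall>k<K. prob_space (muP k) \<and> sets (muP k) = sets borel"
    and A4_orth: "\<forall>k<K. AE P in muP k.
        P ** transpose P = (real CARD('dn) / real CARD('r)) *\<^sub>R mat 1"
    and A4_mean: "\<forall>k<K. integrable (muP k) (\<lambda>P. transpose P ** P)
        \<and> (\<integral>P. transpose P ** P \<partial>muP k) = mat 1"
    and W_prob: "prob_space muW" and W_sets: "sets muW = sets borel"
    and eta_pos: "0 < eta"
    and eta_le: "eta \<le> real CARD('r) / (16 * L * real CARD('dn) * real J)"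
  shows "ennreal (1 / real N) *
           (\<Sum>n<N. \<Sum>j<J. \<integral>\<^sup>+ \<omega>. ennreal (fedkrso_term eta g n j \<omega>)
               \<partial>round_space muW muP D N K J)
         \<le> ennreal (8 * real J ^ 3 * eta\<^sup>2 * real CARD('dn) / real CARD('r) * vsig\<^sup>2)
           + ennreal (8 * real J ^ 3 * eta\<^sup>2 * real CARD('dn) / real CARD('r))
             * (\<integral>\<^sup>+ \<omega>. ennreal ((norm (gradFg (fst \<omega>)))\<^sup>2) \<partial>round_space muW muP D N K J)
           + ennreal (4 * real J ^ 2 * real CARD('dn) ^ 2 * eta\<^sup>2 * sigma\<^sup>2 / real CARD('r) ^ 2)"
proof -
  define c where "c = real CARD('dn) / real CARD('r)"
  have L_pos: "0 < L" and eta_small: "eta * c * L \<le> 1 / (16 * real J)"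
    unfolding c_def using learning_rate_bound[OF eta_pos eta_le] J by auto
  have rows: "\<forall>k<K. AE P in muP k. P ** transpose P = c *\<^sub>R mat 1"
    using A4_orth unfolding c_def .
  interpret fedkrso_round g D gradF N J L eta sigma c muW muP K
    by (intro fedkrso_round.intro fedkrso_local.intro fedkrso_round_axioms.intro)
      (fact A1 A2_prob A2_meas A2_int A2_unb A2_var less_imp_le[OF L_pos] less_imp_le[OF eta_pos]
        J eta_small W_prob W_sets A4_prob rows A4_mean K)+
  have "gradFg = (\<lambda>W. (1 / real N) *\<^sub>R (\<Sum>n<N. gradF n W))"
    using N grad gradg by (intro ext gradient_average_eq[of N Fn]) auto
  then have "gradFg \<in> borel_measurable borel"
    using borel_measurable_gradF by (simp add: borel_measurable_sum)
  from average_bound[OF N A3 this] show ?thesis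
    by (simp add: c_def power_divide mult_ac)
qed

end
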